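(* Assume the seeds are i.i.d. uniform on $[n]$. If $n\ge6$ is even and $l$ is an integer with $2\le l\le n/2-1$, then $$c:=\limsup_{m\to\infty}\frac{\log\bigl(1-p_1(n,m,l)\bigr)}{m}<0$$ (with the convention $\log 0=-\infty$).
   Context: Candidates $[n]$, $m$ voters; voter $j$ has the clockwise oriented preference list $(s_j,s_j+1,\dots,n,1,\dots,s_j-1)$ with seed $s_j$; seeds are independent and uniform on $[n]$. In an election among a non-empty $S\subseteq[n]$ each voter votes for the first candidate of $S$ in its list; $\Xi_S(i)$ is the number of votes for $i$. Two-round election with partition $(A,B)$ of $[n]$: the winner of $A$ is the $a\in A$ with $\Xi_A(a)>\Xi_A(a')$ for all other $a'\in A$ (if none exists, nobody wins the election); likewise for $B$; between the two first-round winners $a,b$, $a$ wins iff $\Xi_{\{a,b\}}(a)>\Xi_{\{a,b\}}(b)$ (ties: nobody wins). For even $n$ and $2\le l<n/2$, $A^{(1,n,l)}=\{1,\dots,l\}\cup\{l+2i:1\le i\le(n-2l)/2\}$, $B^{(1,n,l)}=[n]\setminus A^{(1,n,l)}$, and $p_1(n,m,l)$ is the probability that candidate $1$ wins the two-round election with partition $(A^{(1,n,l)},B^{(1,n,l)})$. *)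

theory Defs
  imports "HOL-Analysis.Analysis" "HOL-Library.Liminf_Limsup" "HOL-Library.Extended_Real"
begin

text \<open>Candidates are 1..n. A voter with seed s has the list s, s+1, ..., n, 1, ..., s-1,
  so candidate c is at position (c + n - s) mod n (0-based).\<close>
definition pos :: "nat \<Rightarrow> nat \<Rightarrow> nat \<Rightarrow> nat" where
  "pos n s c = (c + n - s) mod n"

definition first_in :: "nat \<Rightarrow> nat set \<Rightarrow> nat \<Rightarrow> nat" where
  "first_in n S s = (THE c. c \<in> S \<and> (\<forall>c'\<in>S. pos n s c \<le> pos n s c'))"

definition votes :: "nat \<Rightarrow> nat \<Rightarrow> (nat \<Rightarrow> nat) \<Rightarrow> nat set \<Rightarrow> nat \<Rightarrow> nat" where
  "votes n m seeds S i = card {j. j < m \<and> first_in n S (seeds j) = i}"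

definition is_winner :: "nat \<Rightarrow> nat \<Rightarrow> (nat \<Rightarrow> nat) \<Rightarrow> nat set \<Rightarrow> nat \<Rightarrow> bool" where
  "is_winner n m seeds S a \<longleftrightarrow> a \<in> S \<and>
     (\<forall>a'\<in>S. a' \<noteq> a \<longrightarrow> votes n m seeds S a > votes n m seeds S a')"

definition wins_two_round :: "nat \<Rightarrow> nat \<Rightarrow> (nat \<Rightarrow> nat) \<Rightarrow> nat set \<Rightarrow> nat set \<Rightarrow> nat \<Rightarrow> bool" where
  "wins_two_round n m seeds A B c \<longleftrightarrow>
     (\<exists>a b. is_winner n m seeds A a \<and> is_winner n m seeds B b \<and>
        ((c = a \<and> votes n m seeds {a, b} a > votes n m seeds {a, b} b) \<or>
         (c = b \<and> votes n m seeds {a, b} b > votes n m seeds {a, b} a)))"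

definition A1 :: "nat \<Rightarrow> nat \<Rightarrow> nat set" where
  "A1 n l = {1..l} \<union> {l + 2 * i | i. 1 \<le> i \<and> i \<le> (n - 2 * l) div 2}"

definition B1 :: "nat \<Rightarrow> nat \<Rightarrow> nat set" where
  "B1 n l = {1..n} - A1 n l"

text \<open>Seeds i.i.d. uniform on [n]: probability = (number of favourable seed vectors) / n^m.\<close>
definition p1 :: "nat \<Rightarrow> nat \<Rightarrow> nat \<Rightarrow> real" where
  "p1 n m l = real (card {seeds \<in> {0..<m} \<rightarrow>\<^sub>E {1..n}.
                   wins_two_round n m seeds (A1 n l) (B1 n l) 1}) / real n ^ m"

definition lograte :: "nat \<Rightarrow> nat \<Rightarrow> nat \<Rightarrow> ereal" where
  "lograte n l m = (if 1 - p1 n m l = 0 then -\<infinity> else ereal (ln (1 - p1 n m l) / real m))"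

end

theory Submission
  imports Defs
begin

(*
  Candidate 1 wins as soon as each of the following contests is won by the candidate that the
  seed counts favour: 1 against every other candidate in the first round of A, l + 1 against
  every other candidate in the first round of B, and 1 against l + 1 in the final.  For the
  partition (A1, B1), candidate 1 is first in A1 for the seeds 1, n - 1 and n, and l + 1 is
  first in B1 for the seeds 1, ..., l + 1, while every other candidate of either part lies at
  distance at most 2 above another candidate of the same part and so gets at most 2 seeds; in
  the final, 1 has n - l seeds against l.  In each contest the vote difference is a sum of m
  i.i.d. steps in {-1, 0, 1} with positive drift, so by a Chernoff bound it is nonpositive with
  probability at most (1 - 1/(4 n^2))^m.  A union bound over the at most n contests gives
  1 - p1 <= n (1 - 1/(4 n^2))^m, so the limsup is at most ln (1 - 1/(4 n^2)) < 0.
*)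

section \<open>A Chernoff bound for walks with steps in \<open>{-1, 0, 1}\<close>\<close>

lemma card_PiE_sum_nonpos_le:
  fixes f :: "'a \<Rightarrow> int" and \<theta> :: real
  assumes fin: "finite S" and \<theta>: "\<theta> \<ge> 0"
  shows "real (card {x \<in> {0..<m} \<rightarrow>\<^sub>E S. (\<Sum>j<m. f (x j)) \<le> 0})
         \<le> (\<Sum>s\<in>S. exp (- \<theta> * f s)) ^ m"
proof -
  let ?P = "{x \<in> {0..<m} \<rightarrow>\<^sub>E S. (\<Sum>j<m. f (x j)) \<le> 0}"
  let ?g = "\<lambda>x. exp (- \<theta> * real_of_int (\<Sum>j<m. f (x j)))"
  have fin_PiE: "finite ({0..<m} \<rightarrow>\<^sub>E S)"
    using fin by (simp add: finite_PiE)
  have "real (card ?P) = (\<Sum>x\<in>?P. 1)"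
    by simp
  also have "\<dots> \<le> (\<Sum>x\<in>?P. ?g x)"
  proof (rule sum_mono)
    fix x assume "x \<in> ?P"
    then have "real_of_int (\<Sum>j<m. f (x j)) \<le> 0"
      by (simp only: of_int_le_0_iff mem_Collect_eq)
    then have "- \<theta> * real_of_int (\<Sum>j<m. f (x j)) \<ge> 0"
      using \<theta> by (intro mult_nonpos_nonpos) auto
    then show "1 \<le> ?g x"
      by simp
  qed
  also have "\<dots> \<le> (\<Sum>x\<in>{0..<m} \<rightarrow>\<^sub>E S. ?g x)"
    by (rule sum_mono2[OF fin_PiE]) auto
  also have "\<dots> = (\<Sum>x\<in>{0..<m} \<rightarrow>\<^sub>E S. \<Prod>j\<in>{0..<m}. exp (- \<theta> * f (x j)))"
    by (intro sum.cong refl) (simp add: exp_sum[symmetric] sum_distrib_left lessThan_atLeast0)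
  also have "\<dots> = (\<Prod>j\<in>{0..<m}. \<Sum>s\<in>S. exp (- \<theta> * f s))"
    by (rule prod_sum_PiE[symmetric]) (use fin in auto)
  also have "\<dots> = (\<Sum>s\<in>S. exp (- \<theta> * f s)) ^ m"
    by simp
  finally show ?thesis .
qed

lemma ternary_mgf_bound:
  fixes N a c :: nat
  assumes "c < a" and "a + c \<le> N"
  shows "real N - real a / (2 * real N) + real c / (2 * real N - 1) \<le> real N - 1 / (4 * real N)"
proof -
  have N: "real N \<ge> 1" and a: "real c + 1 \<le> real a" and aN: "real a \<le> real N"
    using assms by linarith+
  have "real N * real N * (real c + 1) \<le> real N * real N * real a"
    and "real N * real a \<le> real N * real N"
    using N a aN by (intro mult_left_mono; simp)+
  then have "4 * real N * real N + 4 * real N * real a + 8 * real N * real N * real c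
      \<le> 2 * real N + 8 * real N * real N * real a"
    by (simp add: algebra_simps)
  then have "real c / (2 * real N - 1) - real a / (2 * real N) \<le> - 1 / (4 * real N)"
    using N by (simp add: field_simps)
  then show ?thesis
    by linarith
qed

lemma card_PiE_sum_nonpos_le_drift:
  fixes f :: "'a \<Rightarrow> int"
  assumes fin: "finite S" and f: "f ` S \<subseteq> {-1, 0, 1}"
    and drift: "card {s\<in>S. f s = -1} < card {s\<in>S. f s = 1}"
  shows "real (card {x \<in> {0..<m} \<rightarrow>\<^sub>E S. (\<Sum>j<m. f (x j)) \<le> 0})
         \<le> (real (card S) - 1 / (4 * real (card S))) ^ m"
proof -
  define N where "N = card S"
  define a where "a = card {s\<in>S. f s = 1}"
  define c where "c = card {s\<in>S. f s = -1}"
  define \<theta> where "\<theta> = ln (2 * real N / (2 * real N - 1))"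
  have "a + c = card ({s\<in>S. f s = 1} \<union> {s\<in>S. f s = -1})"
    unfolding a_def c_def by (rule card_Un_disjoint[symmetric]) (use fin in auto)
  also have "\<dots> \<le> N"
    unfolding N_def by (rule card_mono[OF fin]) auto
  finally have acN: "a + c \<le> N" .
  have ca: "c < a"
    using drift by (simp add: a_def c_def)
  then have N: "real N \<ge> 1"
    using acN by linarith
  have \<theta>: "\<theta> \<ge> 0"
    using N by (simp add: \<theta>_def)
  have exp_\<theta>: "exp (- \<theta> * f s) =
      1 - (if f s = 1 then 1 / (2 * real N) else 0) + (if f s = -1 then 1 / (2 * real N - 1) else 0)"
    if "s \<in> S" for s
    using f that N by (auto simp: \<theta>_def exp_minus field_simps)
  have "(\<Sum>s\<in>S. exp (- \<theta> * f s)) = (\<Sum>s\<in>S.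
      1 - (if f s = 1 then 1 / (2 * real N) else 0) + (if f s = -1 then 1 / (2 * real N - 1) else 0))"
    by (rule sum.cong[OF refl exp_\<theta>])
  also have "\<dots> = real N - real a / (2 * real N) + real c / (2 * real N - 1)"
    by (simp add: sum.distrib sum_subtractf sum.If_cases[OF fin] N_def a_def c_def
        Int_def conj_commute)
  also have "\<dots> \<le> real N - 1 / (4 * real N)"
    by (rule ternary_mgf_bound[OF ca acN])
  finally have mgf: "(\<Sum>s\<in>S. exp (- \<theta> * f s)) \<le> real N - 1 / (4 * real N)" .
  have "real (card {x \<in> {0..<m} \<rightarrow>\<^sub>E S. (\<Sum>j<m. f (x j)) \<le> 0}) \<le> (\<Sum>s\<in>S. exp (- \<theta> * f s)) ^ m"
    by (rule card_PiE_sum_nonpos_le[OF fin \<theta>])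
  also have "\<dots> \<le> (real N - 1 / (4 * real N)) ^ m"
    by (rule power_mono[OF mgf]) (simp add: sum_nonneg)
  finally show ?thesis
    by (simp add: N_def)
qed

section \<open>First choices on the circle\<close>

definition seed_count :: "nat \<Rightarrow> nat set \<Rightarrow> nat \<Rightarrow> nat" where
  "seed_count n S c = card {s \<in> {1..n}. first_in n S s = c}"

lemma pos_eq:
  assumes "s \<in> {1..n}" and "c \<in> {1..n}"
  shows "pos n s c = (if s \<le> c then c - s else c + n - s)"
proof (cases "s \<le> c")
  case True
  then have "c + n - s = (c - s) + n"
    by simp
  then have "pos n s c = (c - s) mod n"
    by (simp add: pos_def)
  with True assms show ?thesis
    by simp
next
  case False
  with assms show ?thesis
    by (simp add: pos_def)
qed

lemma inj_on_pos:
  assumes "s \<in> {1..n}"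
  shows "inj_on (pos n s) {1..n}"
  using assms by (intro inj_onI) (auto simp: pos_eq split: if_splits)

lemma first_in_eqI:
  assumes S: "S \<subseteq> {1..n}" and s: "s \<in> {1..n}" and c: "c \<in> S"
    and least: "\<forall>c'\<in>S. pos n s c \<le> pos n s c'"
  shows "first_in n S s = c"
  unfolding first_in_def
proof (rule the_equality)
  show "c \<in> S \<and> (\<forall>c'\<in>S. pos n s c \<le> pos n s c')"
    using c least by blast
next
  fix d assume d: "d \<in> S \<and> (\<forall>c'\<in>S. pos n s d \<le> pos n s c')"
  then have "pos n s d = pos n s c"
    using c least by (meson le_antisym)
  then show "d = c"
    using inj_on_pos[OF s] d c S by (auto dest: inj_onD)
qed

lemma first_in_least:
  assumes S: "S \<subseteq> {1..n}" and d: "d \<in> S" and s: "s \<in> {1..n}"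
  shows "first_in n S s \<in> S" and "\<forall>c'\<in>S. pos n s (first_in n S s) \<le> pos n s c'"
proof -
  obtain c where c: "c \<in> S" "\<forall>c'\<in>S. pos n s c \<le> pos n s c'"
    using ex_has_least_nat[of "\<lambda>c. c \<in> S" d "pos n s"] d by blast
  then show "first_in n S s \<in> S" and "\<forall>c'\<in>S. pos n s (first_in n S s) \<le> pos n s c'"
    using first_in_eqI[OF S s c(1)] by simp_all
qed

lemma first_in_eqI_ascending:
  assumes S: "S \<subseteq> {1..n}" and c: "c \<in> S" and s: "1 \<le> s" "s \<le> c"
    and gap: "\<forall>c'\<in>S. \<not> (s \<le> c' \<and> c' < c)"
  shows "first_in n S s = c"
proof (rule first_in_eqI[OF S _ c])
  show s_range: "s \<in> {1..n}"
    using s c S by auto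
  show "\<forall>c'\<in>S. pos n s c \<le> pos n s c'"
  proof
    fix c' assume "c' \<in> S"
    with c S have "c \<in> {1..n}" "c' \<in> {1..n}"
      by auto
    with \<open>c' \<in> S\<close> s gap show "pos n s c \<le> pos n s c'"
      by (auto simp: pos_eq[OF s_range])
  qed
qed

lemma first_in_eqI_wrapping:
  assumes S: "S \<subseteq> {1..n}" and c: "c \<in> S" and s: "c < s" "s \<le> n"
    and above: "\<forall>c'\<in>S. c \<le> c' \<and> c' < s"
  shows "first_in n S s = c"
proof (rule first_in_eqI[OF S _ c])
  show s_range: "s \<in> {1..n}"
    using s by auto
  show "\<forall>c'\<in>S. pos n s c \<le> pos n s c'"
  proof
    fix c' assume "c' \<in> S"
    with c S have "c \<in> {1..n}" "c' \<in> {1..n}"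
      by auto
    with \<open>c' \<in> S\<close> s above show "pos n s c \<le> pos n s c'"
      by (auto simp: pos_eq[OF s_range])
  qed
qed

lemma first_in_eq_imp_between:
  assumes S: "S \<subseteq> {1..n}" and d: "d \<in> S" "d < c" and s: "s \<in> {1..n}"
    and first: "first_in n S s = c"
  shows "d < s \<and> s \<le> c"
proof -
  have "c \<in> S" and "pos n s c \<le> pos n s d"
    using first_in_least[OF S d(1) s] first d(1) by auto
  moreover from this(1) d(1) S have "c \<in> {1..n}" "d \<in> {1..n}"
    by auto
  ultimately show ?thesis
    using s d(2) by (auto simp: pos_eq[OF s] split: if_splits)
qed

lemma seed_count_le_gap:
  assumes "S \<subseteq> {1..n}" and "d \<in> S" and "d < c"
  shows "seed_count n S c \<le> c - d"
proof -
  have "{s \<in> {1..n}. first_in n S s = c} \<subseteq> {d<..c}"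
    using first_in_eq_imp_between[OF assms] by auto
  then show ?thesis
    unfolding seed_count_def using card_mono[of "{d<..c}"] by fastforce
qed

lemma int_votes_eq_sum:
  "int (votes n m seeds S c) = (\<Sum>j<m. if first_in n S (seeds j) = c then 1 else 0)"
proof -
  have "{j. j < m \<and> first_in n S (seeds j) = c} = {j \<in> {..<m}. first_in n S (seeds j) = c}"
    by auto
  then have "int (votes n m seeds S c) = (\<Sum>j\<in>{j \<in> {..<m}. first_in n S (seeds j) = c}. 1)"
    by (simp add: votes_def)
  also have "\<dots> = (\<Sum>j<m. if first_in n S (seeds j) = c then 1 else 0)"
    by (rule sum.inter_filter) simp
  finally show ?thesis .
qed

section \<open>Two-round elections\<close>

lemma card_votes_not_ahead_le:
  assumes ahead: "seed_count n S y < seed_count n S x"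
  shows "real (card {seeds \<in> {0..<m} \<rightarrow>\<^sub>E {1..n}. votes n m seeds S x \<le> votes n m seeds S y})
         \<le> (real n - 1 / (4 * real n)) ^ m"
proof -
  define f :: "nat \<Rightarrow> int" where
    "f s = (if first_in n S s = x then 1 else 0) - (if first_in n S s = y then 1 else 0)" for s
  have "x \<noteq> y"
    using ahead by auto
  have "(\<Sum>j<m. f (seeds j)) = int (votes n m seeds S x) - int (votes n m seeds S y)" for seeds
    by (simp add: f_def sum_subtractf int_votes_eq_sum)
  then have "votes n m seeds S x \<le> votes n m seeds S y \<longleftrightarrow> (\<Sum>j<m. f (seeds j)) \<le> 0" for seeds
    by simp
  then have "{seeds \<in> {0..<m} \<rightarrow>\<^sub>E {1..n}. votes n m seeds S x \<le> votes n m seeds S y}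
      = {seeds \<in> {0..<m} \<rightarrow>\<^sub>E {1..n}. (\<Sum>j<m. f (seeds j)) \<le> 0}"
    by blast
  moreover have "{s \<in> {1..n}. f s = 1} = {s \<in> {1..n}. first_in n S s = x}"
    and "{s \<in> {1..n}. f s = -1} = {s \<in> {1..n}. first_in n S s = y}"
    using \<open>x \<noteq> y\<close> by (auto simp: f_def)
  ultimately show ?thesis
    using ahead card_PiE_sum_nonpos_le_drift[of "{1..n}" f m]
    by (simp add: f_def seed_count_def image_subset_iff)
qed

lemma not_wins_two_round_imp:
  assumes "\<not> wins_two_round n m seeds A B a" and "a \<in> A" and "b \<in> B"
  shows "(\<exists>y\<in>A - {a}. votes n m seeds A a \<le> votes n m seeds A y)
    \<or> (\<exists>y\<in>B - {b}. votes n m seeds B b \<le> votes n m seeds B y)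
    \<or> votes n m seeds {a, b} a \<le> votes n m seeds {a, b} b"
proof (rule ccontr)
  assume "\<not> ?thesis"
  with assms(2,3) have "is_winner n m seeds A a" "is_winner n m seeds B b"
    "votes n m seeds {a, b} b < votes n m seeds {a, b} a"
    unfolding is_winner_def by (auto simp: not_le)
  with assms(1) show False
    unfolding wins_two_round_def by blast
qed

lemma card_UN_le_card_mult:
  assumes "finite T" and "\<And>y. y \<in> T \<Longrightarrow> real (card (E y)) \<le> K"
  shows "real (card (\<Union>y\<in>T. E y)) \<le> real (card T) * K"
proof -
  have "real (card (\<Union>y\<in>T. E y)) \<le> (\<Sum>y\<in>T. real (card (E y)))"
    using card_UN_le[OF assms(1), of E] by (simp flip: of_nat_sum)
  also have "\<dots> \<le> real (card T) * K"
    using assms(2) by (rule sum_bounded_above)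
  finally show ?thesis .
qed

lemma card_not_wins_two_round_le:
  assumes A: "finite A" "a \<in> A" and B: "finite B" "b \<in> B"
    and a_wins_A: "\<And>y. y \<in> A - {a} \<Longrightarrow> seed_count n A y < seed_count n A a"
    and b_wins_B: "\<And>y. y \<in> B - {b} \<Longrightarrow> seed_count n B y < seed_count n B b"
    and a_beats_b: "seed_count n {a, b} b < seed_count n {a, b} a"
  shows "real (card {seeds \<in> {0..<m} \<rightarrow>\<^sub>E {1..n}. \<not> wins_two_round n m seeds A B a})
         \<le> real (card A + card B) * (real n - 1 / (4 * real n)) ^ m"
proof -
  let ?P = "{0..<m} \<rightarrow>\<^sub>E {1..n}"
  let ?K = "(real n - 1 / (4 * real n)) ^ m"
  define E where "E S x y = {seeds \<in> ?P. votes n m seeds S x \<le> votes n m seeds S y}" for S x y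
  let ?U\<^sub>A = "\<Union>y\<in>A - {a}. E A a y" and ?U\<^sub>B = "\<Union>y\<in>B - {b}. E B b y"
  have E: "real (card (E S x y)) \<le> ?K" if "seed_count n S y < seed_count n S x" for S x y
    unfolding E_def using that by (rule card_votes_not_ahead_le)
  have "n \<noteq> 0"
    using a_beats_b by (cases n) (simp_all add: seed_count_def)
  then have "1 / (4 * real n) \<le> 1" and "real n \<ge> 1"
    by simp_all
  then have "?K \<ge> 0"
    by (intro zero_le_power) linarith
  have "finite (E S x y)" for S x y
    unfolding E_def by (simp add: finite_PiE)
  moreover have "{seeds \<in> ?P. \<not> wins_two_round n m seeds A B a} \<subseteq> ?U\<^sub>A \<union> ?U\<^sub>B \<union> E {a, b} a b"
    using not_wins_two_round_imp[OF _ A(2) B(2)] by (fastforce simp: E_def)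
  ultimately have "card {seeds \<in> ?P. \<not> wins_two_round n m seeds A B a}
      \<le> card (?U\<^sub>A \<union> ?U\<^sub>B \<union> E {a, b} a b)"
    using A(1) B(1) by (intro card_mono) auto
  also have "\<dots> \<le> card ?U\<^sub>A + card ?U\<^sub>B + card (E {a, b} a b)"
    using card_Un_le[of ?U\<^sub>A ?U\<^sub>B] card_Un_le[of "?U\<^sub>A \<union> ?U\<^sub>B" "E {a, b} a b"] by linarith
  finally have "real (card {seeds \<in> ?P. \<not> wins_two_round n m seeds A B a})
      \<le> real (card ?U\<^sub>A) + real (card ?U\<^sub>B) + real (card (E {a, b} a b))"
    by linarith
  also have "\<dots> \<le> real (card (A - {a})) * ?K + real (card (B - {b})) * ?K + ?K"
    using A(1) B(1) E a_wins_A b_wins_B a_beats_b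
    by (intro add_mono card_UN_le_card_mult) auto
  also have "\<dots> = real (card (A - {a}) + card (B - {b}) + 1) * ?K"
    by (simp add: algebra_simps)
  also have "\<dots> \<le> real (card A + card B) * ?K"
    using card_Diff1_less[OF A] card_Diff1_less[OF B] \<open>?K \<ge> 0\<close>
    by (intro mult_right_mono) simp_all
  finally show ?thesis .
qed

section \<open>The partition \<open>(A1, B1)\<close>\<close>

lemma one_minus_p1_eq:
  assumes "n \<ge> 1"
  shows "1 - p1 n m l = real (card {seeds \<in> {0..<m} \<rightarrow>\<^sub>E {1..n}.
            \<not> wins_two_round n m seeds (A1 n l) (B1 n l) 1}) / real n ^ m"
proof -
  let ?P = "{0..<m} \<rightarrow>\<^sub>E {1..n}"
  let ?W = "{seeds \<in> ?P. wins_two_round n m seeds (A1 n l) (B1 n l) 1}"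
  let ?L = "{seeds \<in> ?P. \<not> wins_two_round n m seeds (A1 n l) (B1 n l) 1}"
  have "finite ?P"
    by (simp add: finite_PiE)
  then have "card ?W + card ?L = card (?W \<union> ?L)"
    by (intro card_Un_disjoint[symmetric]) auto
  also have "?W \<union> ?L = ?P"
    by blast
  also have "card ?P = n ^ m"
    by (simp add: card_PiE)
  finally have "real (card ?W + card ?L) = real (n ^ m)"
    by (rule arg_cong)
  then have "real n ^ m - real (card ?W) = real (card ?L)"
    by (simp only: of_nat_add of_nat_power)
  moreover have "1 - p1 n m l = (real n ^ m - real (card ?W)) / real n ^ m"
    using assms by (simp add: p1_def diff_divide_distrib)
  ultimately show ?thesis
    by simp
qed

lemma A1_mem:
  "x \<in> A1 n l \<longleftrightarrow> (1 \<le> x \<and> x \<le> l) \<or> (\<exists>i. 1 \<le> i \<and> i \<le> (n - 2 * l) div 2 \<and> x = l + 2 * i)"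
  by (auto simp: A1_def)

lemma B1_subset: "B1 n l \<subseteq> {1..n}"
  by (auto simp: B1_def)

context
  fixes n l :: nat
  assumes l: "2 \<le> l" and n: "2 * l + 2 \<le> n"
begin

lemma A1_bounds: "x \<in> A1 n l \<Longrightarrow> 1 \<le> x \<and> x \<le> n - 2"
  using l n by (auto simp: A1_mem)

lemma A1_subset: "A1 n l \<subseteq> {1..n}"
  using A1_bounds by fastforce

lemma one_in_A1: "1 \<in> A1 n l"
  using l by (auto simp: A1_mem)

lemma Suc_l_in_B1: "l + 1 \<in> B1 n l"
proof -
  have "l + 1 \<noteq> l + 2 * i" for i
    by presburger
  then have "l + 1 \<notin> A1 n l"
    unfolding A1_mem by auto
  with n show ?thesis
    by (auto simp: B1_def)
qed

lemma A1_gap: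
  assumes a: "a \<in> A1 n l" "a \<noteq> 1"
  obtains d where "d \<in> A1 n l" "d < a" "a \<le> d + 2"
proof (cases "a \<le> l")
  case True
  have "1 \<le> a"
    using A1_bounds[OF a(1)] by simp
  with True a(2) have "a - 1 \<in> A1 n l"
    unfolding A1_mem by (intro disjI1) linarith
  with \<open>1 \<le> a\<close> a(2) that[of "a - 1"] show ?thesis
    by simp
next
  case False
  with a obtain i where i: "1 \<le> i" "i \<le> (n - 2 * l) div 2" "a = l + 2 * i"
    by (auto simp: A1_mem)
  show ?thesis
  proof (cases "i = 1")
    case True
    have "l \<in> A1 n l"
      unfolding A1_mem using l by simp
    with i True that[of l] show ?thesis
      by simp
  next
    case False
    with i have "l + 2 * (i - 1) \<in> A1 n l"
      unfolding A1_mem by (intro disjI2 exI[of _ "i - 1"]) auto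
    with i False that[of "l + 2 * (i - 1)"] show ?thesis
      by auto
  qed
qed

lemma B1_gap:
  assumes b: "b \<in> B1 n l" "b \<noteq> l + 1"
  obtains d where "d \<in> B1 n l" "d < b" "b \<le> d + 2"
proof -
  have b_range: "b \<notin> A1 n l" "b \<le> n"
    using b by (auto simp: B1_def)
  then have "b \<ge> l + 2"
    using b by (auto simp: A1_mem B1_def)
  show ?thesis
  proof (cases "b - 1 \<in> A1 n l")
    case False
    with b_range \<open>b \<ge> l + 2\<close> have "b - 1 \<in> B1 n l"
      by (auto simp: B1_def)
    with \<open>b \<ge> l + 2\<close> that[of "b - 1"] show ?thesis
      by auto
  next
    case True
    with \<open>b \<ge> l + 2\<close> obtain i where i: "b - 1 = l + 2 * i"
      by (auto simp: A1_mem)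
    have "b - 2 \<notin> A1 n l"
    proof
      assume "b - 2 \<in> A1 n l"
      then have "b - 2 \<le> l \<or> (\<exists>j. b - 2 = l + 2 * j)"
        by (auto simp: A1_mem)
      with i \<open>b \<ge> l + 2\<close> show False
        by presburger
    qed
    with b_range \<open>b \<ge> l + 2\<close> l have "b - 2 \<in> B1 n l"
      by (auto simp: B1_def)
    with \<open>b \<ge> l + 2\<close> that[of "b - 2"] show ?thesis
      by auto
  qed
qed

lemma seed_count_A1_less:
  assumes "a \<in> A1 n l - {1}"
  shows "seed_count n (A1 n l) a < seed_count n (A1 n l) 1"
proof -
  obtain d where "d \<in> A1 n l" "d < a" "a \<le> d + 2"
    using A1_gap assms by blast
  then have "seed_count n (A1 n l) a \<le> 2"
    using seed_count_le_gap[OF A1_subset, of d a] by linarith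
  have "first_in n (A1 n l) s = 1" if "s \<in> {1, n - 1, n}" for s
  proof (cases "s = 1")
    case True
    then show ?thesis
      by (intro first_in_eqI_ascending[OF A1_subset one_in_A1]) auto
  next
    case False
    with that n show ?thesis
      by (intro first_in_eqI_wrapping[OF A1_subset one_in_A1]) (auto dest: A1_bounds)
  qed
  then have "{1, n - 1, n} \<subseteq> {s \<in> {1..n}. first_in n (A1 n l) s = 1}"
    using n by auto
  then have "card {1, n - 1, n} \<le> seed_count n (A1 n l) 1"
    unfolding seed_count_def by (intro card_mono) auto
  moreover have "card {1, n - 1, n} = 3"
    using n l by (simp add: card_insert_if)
  ultimately show ?thesis
    using \<open>seed_count n (A1 n l) a \<le> 2\<close> by linarith
qed

lemma seed_count_B1_less:
  assumes "b \<in> B1 n l - {l + 1}"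
  shows "seed_count n (B1 n l) b < seed_count n (B1 n l) (l + 1)"
proof -
  obtain d where "d \<in> B1 n l" "d < b" "b \<le> d + 2"
    using B1_gap assms by blast
  then have "seed_count n (B1 n l) b \<le> 2"
    using seed_count_le_gap[OF B1_subset[of n l], of d b] by linarith
  have "first_in n (B1 n l) s = l + 1" if "s \<in> {1..l + 1}" for s
    using that by (intro first_in_eqI_ascending[OF B1_subset Suc_l_in_B1]) (auto simp: B1_def A1_mem)
  with n have "{1..l + 1} \<subseteq> {s \<in> {1..n}. first_in n (B1 n l) s = l + 1}"
    by auto
  then have "card {1..l + 1} \<le> seed_count n (B1 n l) (l + 1)"
    unfolding seed_count_def by (intro card_mono) auto
  with l \<open>seed_count n (B1 n l) b \<le> 2\<close> show ?thesis
    by simp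
qed

lemma seed_count_final_less: "seed_count n {1, l + 1} (l + 1) < seed_count n {1, l + 1} 1"
proof -
  have pair: "{1, l + 1} \<subseteq> {1..n}"
    using n by auto
  have "seed_count n {1, l + 1} (l + 1) \<le> l"
    using seed_count_le_gap[OF pair, of 1 "l + 1"] l by simp
  have "first_in n {1, l + 1} s = 1" if "s \<in> {l + 2..n}" for s
    using that by (intro first_in_eqI_wrapping[OF pair]) auto
  then have "{l + 2..n} \<subseteq> {s \<in> {1..n}. first_in n {1, l + 1} s = 1}"
    by auto
  then have "card {l + 2..n} \<le> seed_count n {1, l + 1} 1"
    unfolding seed_count_def by (intro card_mono) auto
  with n \<open>seed_count n {1, l + 1} (l + 1) \<le> l\<close> show ?thesis
    by simp
qed

lemma one_minus_p1_le: "1 - p1 n m l \<le> real n * (1 - 1 / (4 * real n ^ 2)) ^ m"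
proof -
  let ?L = "{seeds \<in> {0..<m} \<rightarrow>\<^sub>E {1..n}. \<not> wins_two_round n m seeds (A1 n l) (B1 n l) 1}"
  have fin: "finite (A1 n l)" "finite (B1 n l)"
    using finite_subset[OF A1_subset] finite_subset[OF B1_subset] by simp_all
  have "card (B1 n l) = n - card (A1 n l)"
    unfolding B1_def using card_Diff_subset[OF fin(1) A1_subset] by simp
  moreover have "card (A1 n l) \<le> n"
    using card_mono[OF _ A1_subset] by simp
  ultimately have cards: "card (A1 n l) + card (B1 n l) = n"
    by simp
  have "1 - p1 n m l = real (card ?L) / real n ^ m"
    using n by (intro one_minus_p1_eq) simp
  also have "\<dots> \<le> real n * (real n - 1 / (4 * real n)) ^ m / real n ^ m"
    using card_not_wins_two_round_le[OF fin(1) one_in_A1 fin(2) Suc_l_in_B1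
        seed_count_A1_less seed_count_B1_less seed_count_final_less]
    by (intro divide_right_mono) (simp_all only: cards of_nat_0_le_iff zero_le_power)
  also have "\<dots> = real n * ((real n - 1 / (4 * real n)) / real n) ^ m"
    by (simp add: power_divide)
  also have "(real n - 1 / (4 * real n)) / real n = 1 - 1 / (4 * real n ^ 2)"
    using n by (simp add: field_simps power2_eq_square)
  finally show ?thesis .
qed

end

section \<open>The exponential rate\<close>

lemma limsup_ln_div_le:
  fixes q :: "nat \<Rightarrow> real"
  assumes "\<And>m. 0 \<le> q m" and "\<And>m. q m \<le> C * r ^ m" and "0 < C" and "0 < r"
  shows "limsup (\<lambda>m. if q m = 0 then -\<infinity> else ereal (ln (q m) / real m)) \<le> ereal (ln r)"
proof -
  have bound: "(if q m = 0 then -\<infinity> else ereal (ln (q m) / real m)) \<le> ereal (ln C / real m + ln r)"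
    if "m \<ge> 1" for m
  proof (cases "q m = 0")
    case False
    with assms(1) have "0 < q m"
      by (simp add: order_less_le)
    then have "ln (q m) \<le> ln (C * r ^ m)"
      using assms(2) by (rule ln_mono[rotated])
    also have "\<dots> = ln C + real m * ln r"
      using assms(3,4) by (simp add: ln_mult ln_realpow)
    finally have "ln (q m) / real m \<le> (ln C + real m * ln r) / real m"
      by (rule divide_right_mono) simp
    also have "\<dots> = ln C / real m + ln r"
      using that by (simp add: add_divide_distrib)
    finally show ?thesis
      using False by simp
  qed simp
  have "eventually (\<lambda>m. (if q m = 0 then -\<infinity> else ereal (ln (q m) / real m))
      \<le> ereal (ln C / real m + ln r)) sequentially"
    by (rule eventually_sequentiallyI[of 1]) (rule bound)
  then have "limsup (\<lambda>m. if q m = 0 then -\<infinity> else ereal (ln (q m) / real m))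
      \<le> limsup (\<lambda>m. ereal (ln C / real m + ln r))"
    by (rule Limsup_mono)
  also have "\<dots> = ereal (ln r)"
  proof (rule lim_imp_Limsup)
    have "(\<lambda>m. ln C / real m + ln r) \<longlonglongrightarrow> 0 + ln r"
      by (intro tendsto_add lim_const_over_n tendsto_const)
    then show "(\<lambda>m. ereal (ln C / real m + ln r)) \<longlonglongrightarrow> ereal (ln r)"
      by (intro tendsto_ereal) simp
  qed simp
  finally show ?thesis .
qed

theorem mainTheorem6:
  fixes n l :: nat
  assumes "even n" and "n \<ge> 6" and "2 \<le> l" and "2 * l + 2 \<le> n"
  shows "limsup (\<lambda>m. lograte n l m) < 0"
proof -
  define r where "r = 1 - 1 / (4 * real n ^ 2)"
  have "1 \<le> real n"
    using assms(2) by simp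
  then have "1 \<le> real n ^ 2"
    by (rule one_le_power)
  then have "0 < 4 * real n ^ 2" and "1 < 4 * real n ^ 2"
    by linarith+
  then have "0 < 1 / (4 * real n ^ 2)" and "1 / (4 * real n ^ 2) < 1"
    by (simp_all only: zero_less_divide_1_iff divide_less_eq_1_pos)
  then have r: "0 < r" "r < 1"
    unfolding r_def by linarith+
  have "limsup (\<lambda>m. lograte n l m) \<le> ereal (ln r)"
    unfolding lograte_def
  proof (rule limsup_ln_div_le)
    show "0 \<le> 1 - p1 n m l" for m
      using assms(2) by (simp add: one_minus_p1_eq)
    show "1 - p1 n m l \<le> real n * r ^ m" for m
      unfolding r_def by (rule one_minus_p1_le[OF assms(3,4)])
  qed (use r assms(2) in simp_all)
  also have "\<dots> < 0"
    using r by simp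
  finally show ?thesis .
qed

end
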